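(* Let $Z$ be a compact, arcwise connected, approximately self-similar metric space with a $\kappa$-approximation $\{G_k\}_{k\in\mathbb N}$. For $d_0>0$ let $\mathcal F_0$ be the family of curves $\gamma\subset Z$ with $\mathrm{diam}(\gamma)\ge d_0$. Then, for $d_0$ sufficiently small (compared to $\mathrm{diam}Z$ and to the self-similarity constant $L_0$), for every $p\ge1$ there is a constant $C>0$ such that, writing $M_k=\mathrm{Mod}_p(\mathcal F_0,G_k)$, one has $M_{k+\ell}\le C\,M_k\,M_\ell$ for all $k,\ell\in\mathbb N$. Moreover, when $p$ ranges over a compact subset of $[1,\infty)$, $C$ may be chosen independent of $p$.
   Context: A compact metric space $(Z,d)$ is approximately self-similar if there is $L_0\ge1$ such that for every ball $B(z,r)\subset Z$ with $0<r\le\mathrm{diam}Z$ there is an open subset $U\subset Z$ which is $L_0$-bi-Lipschitz homeomorphic to the rescaled ball $(B(z,r),\frac1r d)$. Combinatorial modulus: for a compact metric space $Z$, $\kappa\ge1$, $k\in\mathbb N$, a finite graph $G_k$ is a $\kappa$-approximation of $Z$ on scale $k$ if it is the incidence graph of a finite covering of $Z$ (vertices identified with covering sets; distinct vertices adjacent iff they intersect) such that each vertex $v$ has $z_v$ with $B(z_v,\kappa^{-1}2^{-k})\subset v\subset B(z_v,\kappa2^{-k})$ and the balls $B(z_v,\kappa^{-1}2^{-k})$ are pairwise disjoint for distinct vertices; $\{G_k\}$ is a $\kappa$-approximation if each $G_k$ is one on scale $k$. For $\rho:G_k^0\to\mathbb R_+$, $L_\rho(\gamma)=\sum_{v\cap\gamma\ne\emptyset}\rho(v)$,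 $M_p(\rho)=\sum_v\rho(v)^p$; $\mathrm{Mod}_p(\mathcal F,G_k)=\inf M_p(\rho)$ over $\rho$ with $L_\rho(\gamma)\ge1$ for all $\gamma\in\mathcal F$. *)

theory Defs
  imports "HOL-Analysis.Analysis"
begin

definition zball :: "'a::metric_space set \<Rightarrow> 'a \<Rightarrow> real \<Rightarrow> 'a set" where
  "zball Z z r = ball z r \<inter> Z"

definition arcwise_connected :: "'a::metric_space set \<Rightarrow> bool" where
  "arcwise_connected Z \<longleftrightarrow>
     (\<forall>x\<in>Z. \<forall>y\<in>Z. x \<noteq> y \<longrightarrow>
        (\<exists>g. arc g \<and> path_image g \<subseteq> Z \<and> pathstart g = x \<and> pathfinish g = y))"

definition approx_self_similar :: "'a::metric_space set \<Rightarrow> real \<Rightarrow> bool" where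
  "approx_self_similar Z L0 \<longleftrightarrow> L0 \<ge> 1 \<and>
     (\<forall>z\<in>Z. \<forall>r. 0 < r \<and> r \<le> diameter Z \<longrightarrow>
        (\<exists>U f. openin (top_of_set Z) U \<and> U \<subseteq> Z \<and>
           bij_betw f (zball Z z r) U \<and>
           (\<forall>x\<in>zball Z z r. \<forall>y\<in>zball Z z r.
              dist x y / r / L0 \<le> dist (f x) (f y) \<and>
              dist (f x) (f y) \<le> L0 * (dist x y / r))))"

text \<open>The graph G_k is the incidence graph of the
  finite covering V (vertices = covering sets; adjacency = nonempty intersection), hence it is
  determined by V, and we represent it by V.\<close>
definition kappa_approx_scale :: "'a::metric_space set \<Rightarrow> real \<Rightarrow> nat \<Rightarrow> 'a set set \<Rightarrow> bool" where
  "kappa_approx_scale Z \<kappa> k V \<longleftrightarrow>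
     finite V \<and> (\<forall>v\<in>V. v \<subseteq> Z) \<and> \<Union>V = Z \<and>
     (\<exists>c. (\<forall>v\<in>V. c v \<in> Z \<and>
              zball Z (c v) (2 powr (- real k) / \<kappa>) \<subseteq> v \<and>
              v \<subseteq> zball Z (c v) (\<kappa> * 2 powr (- real k))) \<and>
          (\<forall>v\<in>V. \<forall>w\<in>V. v \<noteq> w \<longrightarrow>
              zball Z (c v) (2 powr (- real k) / \<kappa>) \<inter> zball Z (c w) (2 powr (- real k) / \<kappa>) = {}))"

definition kappa_approx :: "'a::metric_space set \<Rightarrow> real \<Rightarrow> (nat \<Rightarrow> 'a set set) \<Rightarrow> bool" where
  "kappa_approx Z \<kappa> G \<longleftrightarrow> \<kappa> \<ge> 1 \<and> (\<forall>k. kappa_approx_scale Z \<kappa> k (G k))"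

definition rho_length :: "'a set set \<Rightarrow> ('a set \<Rightarrow> real) \<Rightarrow> 'a set \<Rightarrow> real" where
  "rho_length V \<rho> \<gamma> = (\<Sum>v\<in>{v\<in>V. v \<inter> \<gamma> \<noteq> {}}. \<rho> v)"

definition rho_mass :: "real \<Rightarrow> 'a set set \<Rightarrow> ('a set \<Rightarrow> real) \<Rightarrow> real" where
  "rho_mass p V \<rho> = (\<Sum>v\<in>V. \<rho> v powr p)"

definition comb_mod :: "real \<Rightarrow> 'a set set \<Rightarrow> 'a set set \<Rightarrow> real" where
  "comb_mod p F V = Inf {rho_mass p V \<rho> | \<rho>. (\<forall>v\<in>V. \<rho> v \<ge> 0) \<and>
                                          (\<forall>\<gamma>\<in>F. rho_length V \<rho> \<gamma> \<ge> 1)}"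

definition curves_diam_ge :: "'a::metric_space set \<Rightarrow> real \<Rightarrow> 'a set set" where
  "curves_diam_ge Z d0 = {path_image g | g. path g \<and> path_image g \<subseteq> Z \<and> diameter (path_image g) \<ge> d0}"

end

theory Submission
  imports Defs
begin

text \<open>
  On a fine scale a, every cell v of G_a sits in a ball B(c_a(v), 3\<kappa>2^-a) which
  self-similarity blows up, by an L0-bi-Lipschitz map f_v, to unit size.  Given admissible
  densities \<rho>1 on G_a and \<rho>2 on G_b, the density on G_(a+b)
     \<rho>(w) = \<Sum> (parents v of w) \<Sum> (lifts u of w through f_v) \<rho>1(v) \<rho>2(u)
  is admissible: a curve of diameter \<ge> d0 meeting v contains a piece near v whose f_v-image
  again has diameter \<ge> d0 (this needs d0 \<le> 1/(3L0)).  Bounded multiplicity of the cells,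
  a consequence of compactness plus self-similarity, bounds the mass of \<rho> by a constant times
  mass(\<rho>1) mass(\<rho>2).  Taking infima gives M_(a+b) \<le> C M_a M_b when a is fine; the finitely
  many pairs of coarse scales are covered by the trivial bounds (1/#G_n)^p \<le> M_n \<le> #G_n.
  All constants depend on p only through a factor N^p, hence are uniform on [1,P].
\<close>

lemma compact_separated_card_bound:
  fixes Z :: "'a::metric_space set"
  assumes "compact Z" "e > 0"
  shows "\<exists>N. \<forall>S. S \<subseteq> Z \<longrightarrow> (\<forall>y\<in>S. \<forall>y'\<in>S. y \<noteq> y' \<longrightarrow> e \<le> dist y y') \<longrightarrow> card S \<le> N"
proof -
  have "Z \<subseteq> (\<Union>x\<in>Z. ball x (e/2))" using assms(2) by auto
  then obtain K where K: "K \<subseteq> Z" "finite K" "Z \<subseteq> (\<Union>x\<in>K. ball x (e/2))"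
    using compactE_image[OF assms(1), of Z "\<lambda>x. ball x (e/2)"] by blast
  show ?thesis
  proof (intro exI allI impI)
    fix S assume SZ: "S \<subseteq> Z" and sep: "\<forall>y\<in>S. \<forall>y'\<in>S. y \<noteq> y' \<longrightarrow> e \<le> dist y y'"
    text \<open>Each point of S lies in an (e/2)-ball around a point of K; no ball contains two of them.\<close>
    have "\<forall>y\<in>S. \<exists>x\<in>K. y \<in> ball x (e/2)" using SZ K(3) by blast
    then obtain \<phi> where \<phi>: "\<forall>y\<in>S. \<phi> y \<in> K \<and> y \<in> ball (\<phi> y) (e/2)" by metis
    have "inj_on \<phi> S"
    proof (rule inj_onI)
      fix y y' assume "y \<in> S" "y' \<in> S" "\<phi> y = \<phi> y'"
      then have "dist y (\<phi> y) < e/2" "dist y' (\<phi> y) < e/2" using \<phi> by (auto simp: dist_commute)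
      then have "dist y y' < e" using dist_triangle_half_l[of y "\<phi> y" e y'] by (auto simp: dist_commute)
      then show "y = y'" using sep \<open>y \<in> S\<close> \<open>y' \<in> S\<close> by force
    qed
    then show "card S \<le> card K" using card_inj_on_le[of \<phi> S K] \<phi> K(2) by blast
  qed
qed

text \<open>Separated sets in balls larger than Z itself: when diam Z < \<sigma>t, a t-separated subset of
  Z is (diam Z/\<sigma>)-separated, so compactness bounds its size (if diam Z = 0, Z has at most one
  point).\<close>
lemma compact_coarse_separated_card_bound:
  fixes Z :: "'a::metric_space set"
  assumes Zc: "compact Z" and \<sigma>: "\<sigma> > 0"
  shows "\<exists>N. \<forall>t S. diameter Z < \<sigma>*t \<longrightarrow> S \<subseteq> Z \<longrightarrow>
            (\<forall>y\<in>S. \<forall>y'\<in>S. y \<noteq> y' \<longrightarrow> t \<le> dist y y') \<longrightarrow> card S \<le> N"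
proof (cases "diameter Z > 0")
  case True
  obtain N where N: "\<forall>S. S \<subseteq> Z \<longrightarrow> (\<forall>y\<in>S. \<forall>y'\<in>S. y \<noteq> y' \<longrightarrow> diameter Z/\<sigma> \<le> dist y y') \<longrightarrow> card S \<le> N"
    using compact_separated_card_bound[OF Zc, of "diameter Z/\<sigma>"] \<sigma> True by auto
  show ?thesis
  proof (intro exI allI impI)
    fix t S assume t: "diameter Z < \<sigma>*t" and SZ: "S \<subseteq> Z"
      and sep: "\<forall>y\<in>S. \<forall>y'\<in>S. y \<noteq> y' \<longrightarrow> t \<le> dist y y'"
    have "diameter Z/\<sigma> < t" using t \<sigma> by (simp add: divide_less_eq mult.commute)
    then have "\<forall>y\<in>S. \<forall>y'\<in>S. y \<noteq> y' \<longrightarrow> diameter Z/\<sigma> \<le> dist y y'"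
      using sep by (meson less_le_trans less_imp_le)
    then show "card S \<le> N" using N SZ by blast
  qed
next
  case False
  have "card S \<le> 1" if SZ: "S \<subseteq> Z" for S
  proof -
    have "dist y y' \<le> diameter Z" if "y \<in> S" "y' \<in> S" for y y'
      using diameter_bounded_bound[OF compact_imp_bounded[OF Zc]] that SZ by auto
    then have "\<forall>y\<in>S. \<forall>y'\<in>S. y = y'" using False by (meson dist_le_zero_iff order.trans not_less)
    then show ?thesis by (cases "finite S") (auto simp: card_le_Suc0_iff_eq)
  qed
  then show ?thesis by blast
qed

lemma blowup_separated_set:
  fixes Z :: "'a::metric_space set"
  assumes ss: "approx_self_similar Z L0" and x: "x \<in> Z" and r: "0 < r" "r \<le> diameter Z"
    and S: "S \<subseteq> zball Z x r" and sep: "\<forall>y\<in>S. \<forall>y'\<in>S. y \<noteq> y' \<longrightarrow> t \<le> dist y y'"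
  shows "\<exists>S'. S' \<subseteq> Z \<and> card S' = card S \<and> (\<forall>z\<in>S'. \<forall>z'\<in>S'. z \<noteq> z' \<longrightarrow> t / r / L0 \<le> dist z z')"
proof -
  have L1: "L0 \<ge> 1" using ss unfolding approx_self_similar_def by auto
  obtain U f where U: "U \<subseteq> Z" "bij_betw f (zball Z x r) U"
    and lip: "\<forall>y\<in>zball Z x r. \<forall>y'\<in>zball Z x r. dist y y' / r / L0 \<le> dist (f y) (f y')"
    using ss[unfolded approx_self_similar_def, THEN conjunct2, rule_format, OF x, of r] r by blast
  have inj: "inj_on f S" using U(2) S unfolding bij_betw_def by (auto intro: inj_on_subset)
  have "\<forall>z\<in>f`S. \<forall>z'\<in>f`S. z \<noteq> z' \<longrightarrow> t / r / L0 \<le> dist z z'"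
  proof (intro ballI impI)
    fix z z' assume "z \<in> f`S" "z' \<in> f`S" "z \<noteq> z'"
    then obtain y y' where yy: "y \<in> S" "y' \<in> S" "z = f y" "z' = f y'" "y \<noteq> y'" by auto
    have "t / r / L0 \<le> dist y y' / r / L0" using sep yy r L1 by (intro divide_right_mono) auto
    also have "\<dots> \<le> dist z z'" using lip yy S by auto
    finally show "t / r / L0 \<le> dist z z'" .
  qed
  moreover have "f ` S \<subseteq> Z" using U S unfolding bij_betw_def by auto
  ultimately show ?thesis using card_image[OF inj] by blast
qed

text \<open>Small
  balls are blown up to unit size; balls larger than Z are handled by compactness directly.\<close>
lemma self_similar_separated_card_bound:
  fixes Z :: "'a::metric_space set"
  assumes Zc: "compact Z" and ss: "approx_self_similar Z L0" and \<sigma>: "\<sigma> > 0"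
  shows "\<exists>N. \<forall>x\<in>Z. \<forall>t>0. \<forall>S. S \<subseteq> Z \<inter> ball x (\<sigma>*t) \<longrightarrow>
            (\<forall>y\<in>S. \<forall>y'\<in>S. y \<noteq> y' \<longrightarrow> t \<le> dist y y') \<longrightarrow> card S \<le> N"
proof -
  have L1: "L0 \<ge> 1" using ss unfolding approx_self_similar_def by auto
  obtain N1 where N1: "\<forall>S. S \<subseteq> Z \<longrightarrow> (\<forall>y\<in>S. \<forall>y'\<in>S. y \<noteq> y' \<longrightarrow> 1/(\<sigma>*L0) \<le> dist y y') \<longrightarrow> card S \<le> N1"
    using compact_separated_card_bound[OF Zc, of "1/(\<sigma>*L0)"] \<sigma> L1 by auto
  obtain N2 where N2: "\<forall>t S. diameter Z < \<sigma>*t \<longrightarrow> S \<subseteq> Z \<longrightarrow>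
            (\<forall>y\<in>S. \<forall>y'\<in>S. y \<noteq> y' \<longrightarrow> t \<le> dist y y') \<longrightarrow> card S \<le> N2"
    using compact_coarse_separated_card_bound[OF Zc \<sigma>] by blast
  show ?thesis
  proof (intro exI ballI allI impI)
    fix x t S assume x: "x \<in> Z" and t: "t > 0" and SZ: "S \<subseteq> Z \<inter> ball x (\<sigma>*t)"
      and sep: "\<forall>y\<in>S. \<forall>y'\<in>S. y \<noteq> y' \<longrightarrow> t \<le> dist y y'"
    show "card S \<le> max N1 N2"
    proof (cases "\<sigma>*t \<le> diameter Z")
      case True
      have "S \<subseteq> zball Z x (\<sigma>*t)" using SZ unfolding zball_def by auto
      then obtain S' where S': "S' \<subseteq> Z" "card S' = card S"
        "\<forall>z\<in>S'. \<forall>z'\<in>S'. z \<noteq> z' \<longrightarrow> t / (\<sigma>*t) / L0 \<le> dist z z'"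
        using blowup_separated_set[OF ss x _ True _ sep] \<sigma> t by auto
      moreover have "t / (\<sigma>*t) / L0 = 1/(\<sigma>*L0)" using t by simp
      ultimately show ?thesis using N1 by (metis le_max_iff_disj)
    next
      case False
      then show ?thesis using N2 SZ sep by (metis le_infE le_max_iff_disj not_le)
    qed
  qed
qed

lemma powr_sum_le_card_powr:
  fixes x :: "'b \<Rightarrow> real"
  assumes "finite I" "\<forall>i\<in>I. x i \<ge> 0" "p \<ge> 1"
  shows "(\<Sum>i\<in>I. x i) powr p \<le> real (card I) powr p * (\<Sum>i\<in>I. x i powr p)"
proof (cases "I = {}")
  case True then show ?thesis by simp
next
  case False
  define m where "m = Max (x ` I)"
  have "m \<in> x ` I" unfolding m_def using assms(1) False by simp
  then obtain j where j: "j \<in> I" "m = x j" by blast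
  have le: "\<forall>i\<in>I. x i \<le> m" unfolding m_def using assms(1) by simp
  have m0: "m \<ge> 0" using j assms(2) by auto
  have "(\<Sum>i\<in>I. x i) \<le> (\<Sum>i\<in>I. m)" using le by (intro sum_mono) auto
  then have "(\<Sum>i\<in>I. x i) \<le> real (card I) * m" by simp
  then have "(\<Sum>i\<in>I. x i) powr p \<le> (real (card I) * m) powr p"
    using assms by (intro powr_mono2) (auto intro: sum_nonneg)
  also have "\<dots> = real (card I) powr p * m powr p" using m0 by (simp add: powr_mult)
  also have "\<dots> \<le> real (card I) powr p * (\<Sum>i\<in>I. x i powr p)"
    using j assms(1) by (auto intro!: mult_left_mono member_le_sum)
  finally show ?thesis .
qed

lemma sum_UN_le:
  fixes h :: "'b \<Rightarrow> real"
  assumes "finite W" "\<forall>w\<in>W. finite (S w)" "\<forall>w\<in>W. \<forall>u\<in>S w. h u \<ge> 0"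
  shows "sum h (\<Union>w\<in>W. S w) \<le> (\<Sum>w\<in>W. sum h (S w))"
  using assms
proof (induction W rule: finite_induct)
  case empty then show ?case by simp
next
  case (insert a W)
  have "sum h (\<Union>w\<in>insert a W. S w) \<le> sum h (S a) + sum h (\<Union>w\<in>W. S w)"
    using insert by (simp only: UN_insert, subst sum_Un) (auto intro!: sum_nonneg)
  also have "\<dots> \<le> sum h (S a) + (\<Sum>w\<in>W. sum h (S w))" using insert by auto
  finally show ?case using insert by simp
qed

lemma member_le_double_sum:
  fixes f :: "nat \<Rightarrow> nat \<Rightarrow> real"
  assumes f: "\<And>i j. f i j \<ge> 0" and kl: "k < n" "l < n"
  shows "f k l \<le> (\<Sum>i<n. \<Sum>j<n. f i j)"
proof -
  have "f k l \<le> (\<Sum>j<n. f k j)" using kl f by (intro member_le_sum) auto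
  also have "\<dots> \<le> (\<Sum>i<n. \<Sum>j<n. f i j)"
    using kl f by (intro member_le_sum[of k "{..<n}" "\<lambda>i. \<Sum>j<n. f i j"]) (auto intro!: sum_nonneg)
  finally show ?thesis .
qed

lemma le_mult_Inf:
  fixes S :: "real set"
  assumes "S \<noteq> {}" "\<forall>s\<in>S. s \<ge> 0" "\<forall>s\<in>S. x \<le> c * s" "c \<ge> 0"
  shows "x \<le> c * Inf S"
proof (cases "c = 0")
  case True
  then show ?thesis using assms by auto
next
  case False
  then have "x / c \<le> Inf S" using assms by (intro cInf_greatest) (auto simp: field_simps)
  then show ?thesis using False assms(4) by (simp add: field_simps)
qed

lemma first_crossing_time:
  fixes \<phi> :: "real \<Rightarrow> real"
  assumes cont: "continuous_on {t0..t1} \<phi>" and "t0 \<le> t1" "\<phi> t0 < \<alpha>" "\<alpha> \<le> \<phi> t1"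
  shows "\<exists>s\<in>{t0..t1}. \<phi> s = \<alpha> \<and> (\<forall>u\<in>{t0..s}. \<phi> u \<le> \<alpha>)"
proof -
  have ivt: "\<exists>u. t0 \<le> u \<and> u \<le> t \<and> \<phi> u = \<alpha>" if "t \<in> {t0..t1}" "\<alpha> \<le> \<phi> t" for t
    using that assms by (intro IVT') (auto intro: continuous_on_subset[OF cont])
  define T where "T = {u\<in>{t0..t1}. \<phi> u = \<alpha>}"
  have Tne: "T \<noteq> {}" unfolding T_def using ivt[of t1] assms by auto
  have Tcl: "closed T" unfolding T_def by (intro continuous_closed_preimage_constant cont) auto
  have Tb: "bdd_below T" unfolding T_def by (auto intro: bdd_belowI[of _ t0])
  have sT: "Inf T \<in> T" using closed_contains_Inf[OF Tne Tb Tcl] .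
  have "\<phi> u \<le> \<alpha>" if u: "u \<in> {t0..Inf T}" for u
  proof (rule ccontr)
    assume "\<not> \<phi> u \<le> \<alpha>"
    then obtain u' where u': "t0 \<le> u'" "u' \<le> u" "\<phi> u' = \<alpha>" using ivt[of u] u sT unfolding T_def by auto
    then have "u' \<in> T" unfolding T_def using u sT T_def by auto
    then have "Inf T \<le> u'" using Tb by (simp add: cInf_lower)
    then have "u' = u" using u u' by auto
    then show False using u' \<open>\<not> \<phi> u \<le> \<alpha>\<close> by auto
  qed
  then show ?thesis using sT unfolding T_def by blast
qed

lemma path_restriction:
  fixes g :: "real \<Rightarrow> 'a::topological_space"
  assumes pg: "path g" and st: "0 \<le> s" "s \<le> t" "t \<le> 1"
  shows "\<exists>h. path h \<and> path_image h \<subseteq> g ` {s..t} \<and> pathstart h = g s \<and> pathfinish h = g t"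
proof -
  define lin where "lin = (\<lambda>x::real. s + x * (t - s))"
  have maps: "lin ` {0..1} \<subseteq> {s..t}"
  proof
    fix y assume "y \<in> lin ` {0..1}"
    then obtain x where x: "x \<in> {0..1}" "y = lin x" by auto
    have "x * (t - s) \<le> 1 * (t - s)" using x st by (intro mult_right_mono) auto
    then show "y \<in> {s..t}" using x st unfolding lin_def by auto
  qed
  have cg: "continuous_on {0..1} g" using pg unfolding path_def .
  have maps01: "lin ` {0..1} \<subseteq> {0..1}" using maps st by auto
  have "continuous_on {0..1} lin" unfolding lin_def by (intro continuous_intros)
  then have "path (g \<circ> lin)" unfolding path_def comp_def by (rule continuous_on_compose2[OF cg _ maps01])
  moreover have "path_image (g \<circ> lin) \<subseteq> g ` {s..t}" using maps unfolding path_image_def by auto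
  moreover have "pathstart (g \<circ> lin) = g s" "pathfinish (g \<circ> lin) = g t"
    unfolding pathstart_def pathfinish_def lin_def by auto
  ultimately show ?thesis by blast
qed

lemma subpath_crossing_annulus:
  fixes g :: "real \<Rightarrow> 'a::metric_space"
  assumes pg: "path g" and t01: "t0 \<le> t1" "0 \<le> t0" "t1 \<le> 1"
    and inner: "dist (g t0) c < a" and outer: "2*a \<le> dist (g t1) c"
  shows "\<exists>h. path h \<and> path_image h \<subseteq> path_image g \<and> (\<forall>y\<in>path_image h. dist y c \<le> 2*a) \<and>
            (\<exists>x\<in>path_image h. \<exists>y\<in>path_image h. a \<le> dist x y)"
proof -
  have "continuous_on {t0..t1} (\<lambda>u. dist (g u) c)"
    using pg t01 unfolding path_def
    by (intro continuous_intros) (auto intro: continuous_on_subset)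
  moreover have "a > 0" using inner zero_le_dist[of "g t0" c] by linarith
  ultimately obtain s where s: "s \<in> {t0..t1}" "dist (g s) c = 2*a" and below: "\<forall>u\<in>{t0..s}. dist (g u) c \<le> 2*a"
    using first_crossing_time[of t0 t1 "\<lambda>u. dist (g u) c" "2*a"] t01 inner outer by auto
  obtain h where h: "path h" "path_image h \<subseteq> g ` {t0..s}" "pathstart h = g t0" "pathfinish h = g s"
    using path_restriction[OF pg, of t0 s] s t01 by auto
  have "path_image h \<subseteq> path_image g" using h(2) s t01 unfolding path_image_def by auto
  moreover have "\<forall>y\<in>path_image h. dist y c \<le> 2*a" using h(2) below by auto
  moreover have "a \<le> dist (pathstart h) (pathfinish h)"
    using dist_triangle3[of "g s" c "g t0"] s(2) inner h(3,4) by (simp add: dist_commute)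
  ultimately show ?thesis using h(1) by blast
qed

text \<open>A curve of diameter \<ge> d0 through a point of B(c,a) contains a subcurve inside
  B(c,3a) with two points at distance \<ge> min d0 a: either the whole curve stays in B(c,3a),
  or it must cross the annulus between radii a and 2a.\<close>
lemma curve_piece_in_ball:
  fixes g :: "real \<Rightarrow> 'a::metric_space"
  assumes pg: "path g" and z0: "z0 \<in> path_image g" and dz: "dist z0 c < a"
    and dg: "d0 \<le> diameter (path_image g)"
  shows "\<exists>h. path h \<and> path_image h \<subseteq> path_image g \<inter> ball c (3*a) \<and>
            (\<exists>x\<in>path_image h. \<exists>y\<in>path_image h. min d0 a \<le> dist x y)"
proof (cases "path_image g \<subseteq> ball c (3*a)")
  case True
  have "compact (path_image g)" using pg by (rule compact_path_image)
  then obtain x y where "x \<in> path_image g" "y \<in> path_image g" "dist x y = diameter (path_image g)"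
    using diameter_compact_attained z0 by blast
  then show ?thesis using True pg dg by (intro exI[of _ g]) force
next
  case False
  then obtain z1 where z1: "z1 \<in> path_image g" "3*a \<le> dist z1 c"
    by (auto simp: subset_eq dist_commute not_less)
  obtain t0 where t0: "t0 \<in> {0..1}" "g t0 = z0" using z0 unfolding path_image_def by auto
  obtain t1 where t1: "t1 \<in> {0..1}" "g t1 = z1" using z1 unfolding path_image_def by auto
  have a0: "a > 0" using dz zero_le_dist[of z0 c] by linarith
  have "\<exists>h. path h \<and> path_image h \<subseteq> path_image g \<and> (\<forall>y\<in>path_image h. dist y c \<le> 2*a) \<and>
            (\<exists>x\<in>path_image h. \<exists>y\<in>path_image h. a \<le> dist x y)"
  proof (cases "t0 \<le> t1")
    case True
    then show ?thesis using subpath_crossing_annulus[OF pg True, of c a] t0 t1 dz z1 a0 by auto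
  next
    case False
    have "path (reversepath g)" using pg by simp
    from subpath_crossing_annulus[OF this, of "1 - t0" "1 - t1" c a]
    have "\<exists>h. path h \<and> path_image h \<subseteq> path_image (reversepath g) \<and> (\<forall>y\<in>path_image h. dist y c \<le> 2*a) \<and>
            (\<exists>x\<in>path_image h. \<exists>y\<in>path_image h. a \<le> dist x y)"
      using False t0 t1 dz z1 a0 by (auto simp: reversepath_def)
    then show ?thesis by simp
  qed
  then obtain h where h: "path h" "path_image h \<subseteq> path_image g" "\<forall>y\<in>path_image h. dist y c \<le> 2*a"
     "\<exists>x\<in>path_image h. \<exists>y\<in>path_image h. a \<le> dist x y" by blast
  have "path_image h \<subseteq> ball c (3*a)" using h(3) a0 by (force simp: dist_commute)
  moreover have "\<exists>x\<in>path_image h. \<exists>y\<in>path_image h. min d0 a \<le> dist x y" using h(4) by force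
  ultimately show ?thesis using h by blast
qed

lemma lipschitz_image_in_curves:
  assumes ph: "path h" and hU: "path_image h \<subseteq> U" and lip: "C-lipschitz_on U f" and fU: "f ` U \<subseteq> Z"
    and xy: "x \<in> path_image h" "y \<in> path_image h" "d0 \<le> dist (f x) (f y)"
  shows "f ` path_image h \<in> curves_diam_ge Z d0"
proof -
  have "continuous_on (path_image h) f"
    using lipschitz_on_continuous_on[OF lip] hU by (rule continuous_on_subset)
  then have pfh: "path (f \<circ> h)" using path_continuous_image[OF ph] by blast
  have im: "path_image (f \<circ> h) = f ` path_image h" by (simp add: path_image_compose)
  have "bounded (f ` path_image h)" using compact_path_image[OF pfh] im compact_imp_bounded by metis
  then have "d0 \<le> diameter (path_image (f \<circ> h))"
    using xy im diameter_bounded_bound[of "f ` path_image h" "f x" "f y"] by auto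
  moreover have "path_image (f \<circ> h) \<subseteq> Z" using im hU fU by auto
  ultimately show ?thesis using im pfh unfolding curves_diam_ge_def by (metis (mono_tags, lifting) mem_Collect_eq)
qed

lemma diameter_pos_of_curve:
  assumes "bounded Z" "\<gamma> \<in> curves_diam_ge Z d0" "d0 > 0"
  shows "diameter Z > 0"
proof -
  obtain g where "\<gamma> = path_image g" "path_image g \<subseteq> Z" "d0 \<le> diameter (path_image g)"
    using assms(2) unfolding curves_diam_ge_def by blast
  then show ?thesis using diameter_subset[of "path_image g" Z] assms(1,3) by linarith
qed

lemma powr_double_sum_le:
  fixes x :: "'v \<Rightarrow> real" and y :: "'u \<Rightarrow> real"
  assumes P: "finite P" "card P \<le> NA" and S: "\<And>v. v \<in> P \<Longrightarrow> finite (S v) \<and> card (S v) \<le> NB"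
    and x: "\<forall>v\<in>P. x v \<ge> 0" and y: "\<And>v u. v \<in> P \<Longrightarrow> u \<in> S v \<Longrightarrow> y u \<ge> 0" and p: "p \<ge> 1"
  shows "(\<Sum>v\<in>P. \<Sum>u\<in>S v. x v * y u) powr p
           \<le> (real NA * real NB) powr p * (\<Sum>v\<in>P. \<Sum>u\<in>S v. x v powr p * y u powr p)"
proof -
  have inner: "(\<Sum>u\<in>S v. x v * y u) powr p \<le> real NB powr p * (\<Sum>u\<in>S v. x v powr p * y u powr p)"
    if v: "v \<in> P" for v
  proof -
    have "(\<Sum>u\<in>S v. x v * y u) powr p \<le> real (card (S v)) powr p * (\<Sum>u\<in>S v. (x v * y u) powr p)"
      using S[OF v] p x y[OF v] v by (intro powr_sum_le_card_powr) auto
    also have "(\<Sum>u\<in>S v. (x v * y u) powr p) = (\<Sum>u\<in>S v. x v powr p * y u powr p)"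
      using x y[OF v] v by (intro sum.cong) (auto simp: powr_mult)
    also have "real (card (S v)) powr p * \<dots> \<le> real NB powr p * (\<Sum>u\<in>S v. x v powr p * y u powr p)"
      using S[OF v] p by (intro mult_right_mono powr_mono2 sum_nonneg) auto
    finally show ?thesis .
  qed
  have "(\<Sum>v\<in>P. \<Sum>u\<in>S v. x v * y u) powr p
        \<le> real (card P) powr p * (\<Sum>v\<in>P. (\<Sum>u\<in>S v. x v * y u) powr p)"
    using P p x y by (intro powr_sum_le_card_powr) (auto intro!: sum_nonneg mult_nonneg_nonneg)
  also have "\<dots> \<le> real NA powr p * (\<Sum>v\<in>P. real NB powr p * (\<Sum>u\<in>S v. x v powr p * y u powr p))"
    using P p inner by (intro mult_mono powr_mono2 sum_mono) (auto intro!: sum_nonneg)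
  also have "\<dots> = (real NA * real NB) powr p * (\<Sum>v\<in>P. \<Sum>u\<in>S v. x v powr p * y u powr p)"
    by (simp add: powr_mult sum_distrib_left mult.assoc)
  finally show ?thesis .
qed

lemma sum_double_counting:
  fixes q :: "'v \<Rightarrow> 'u \<Rightarrow> real"
  assumes fin: "finite B" "finite W" and S: "\<And>v w. v \<in> A \<Longrightarrow> w \<in> W \<Longrightarrow> S v w \<subseteq> B"
  shows "(\<Sum>w\<in>W. \<Sum>v\<in>A. \<Sum>u\<in>S v w. q v u) = (\<Sum>v\<in>A. \<Sum>u\<in>B. q v u * real (card {w\<in>W. u \<in> S v w}))"
proof -
  have restrict: "(\<Sum>u\<in>S v w. q v u) = (\<Sum>u\<in>B. if u \<in> S v w then q v u else 0)"
    if "v \<in> A" "w \<in> W" for v w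
  proof -
    have "S v w = B \<inter> S v w" using S[OF that] by auto
    then show ?thesis using sum.inter_restrict[OF fin(1), of "q v" "S v w"] by simp
  qed
  have "(\<Sum>w\<in>W. \<Sum>v\<in>A. \<Sum>u\<in>S v w. q v u) = (\<Sum>w\<in>W. \<Sum>v\<in>A. \<Sum>u\<in>B. if u \<in> S v w then q v u else 0)"
    using restrict by simp
  also have "\<dots> = (\<Sum>v\<in>A. \<Sum>u\<in>B. \<Sum>w\<in>W. if u \<in> S v w then q v u else 0)"
    by (subst sum.swap) (simp add: sum.swap[of _ W])
  also have "\<dots> = (\<Sum>v\<in>A. \<Sum>u\<in>B. q v u * real (card {w\<in>W. u \<in> S v w}))"
    using fin(2) by (simp add: sum.If_cases Int_def conj_commute mult.commute)
  finally show ?thesis .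
qed

text \<open>A density on W is built from densities on A
  and B by summing products over "parent" sets P w \<subseteq> A and "lift" sets S v w \<subseteq> B.\<close>
lemma composed_density_mass:
  fixes P :: "'w \<Rightarrow> 'v set" and S :: "'v \<Rightarrow> 'w \<Rightarrow> 'u set"
    and \<rho>1 :: "'v \<Rightarrow> real" and \<rho>2 :: "'u \<Rightarrow> real"
  assumes fin: "finite A" "finite B" "finite W"
    and P: "\<And>w. w \<in> W \<Longrightarrow> P w \<subseteq> A \<and> card (P w) \<le> NA"
    and S: "\<And>v w. v \<in> A \<Longrightarrow> w \<in> W \<Longrightarrow> S v w \<subseteq> B \<and> card (S v w) \<le> NB"
    and fibre: "\<And>v u. v \<in> A \<Longrightarrow> u \<in> B \<Longrightarrow> card {w\<in>W. u \<in> S v w} \<le> NC"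
    and nonneg: "\<forall>v\<in>A. \<rho>1 v \<ge> 0" "\<forall>u\<in>B. \<rho>2 u \<ge> 0" and p: "p \<ge> 1"
  shows "(\<Sum>w\<in>W. (\<Sum>v\<in>P w. \<Sum>u\<in>S v w. \<rho>1 v * \<rho>2 u) powr p)
           \<le> (real NA * real NB) powr p * real NC * (\<Sum>v\<in>A. \<rho>1 v powr p) * (\<Sum>u\<in>B. \<rho>2 u powr p)"
proof -
  define q where "q v u = \<rho>1 v powr p * \<rho>2 u powr p" for v u
  have q0: "q v u \<ge> 0" for v u unfolding q_def by simp
  have pointwise: "(\<Sum>v\<in>P w. \<Sum>u\<in>S v w. \<rho>1 v * \<rho>2 u) powr p
      \<le> (real NA * real NB) powr p * (\<Sum>v\<in>A. \<Sum>u\<in>S v w. q v u)"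
    if w: "w \<in> W" for w
  proof -
    have SB: "S v w \<subseteq> B \<and> card (S v w) \<le> NB" if "v \<in> P w" for v using P[OF w] S w that by blast
    then have "finite (S v w) \<and> card (S v w) \<le> NB" if "v \<in> P w" for v
      using fin(2) finite_subset that by blast
    moreover have "\<rho>2 u \<ge> 0" if "v \<in> P w" "u \<in> S v w" for v u using SB that nonneg(2) by blast
    moreover have "finite (P w)" using P[OF w] fin(1) finite_subset by blast
    ultimately have "(\<Sum>v\<in>P w. \<Sum>u\<in>S v w. \<rho>1 v * \<rho>2 u) powr p
          \<le> (real NA * real NB) powr p * (\<Sum>v\<in>P w. \<Sum>u\<in>S v w. q v u)"
      unfolding q_def using P[OF w] nonneg(1) p by (intro powr_double_sum_le) auto
    also have "\<dots> \<le> (real NA * real NB) powr p * (\<Sum>v\<in>A. \<Sum>u\<in>S v w. q v u)"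
      using P[OF w] fin(1) q0 by (intro mult_left_mono sum_mono2) (auto intro!: sum_nonneg)
    finally show ?thesis .
  qed
  text \<open>Exchanging the order of summation, each product q v u is counted once per w having u
    among the lifts through v, i.e. at most NC times.\<close>
  have "(\<Sum>w\<in>W. \<Sum>v\<in>A. \<Sum>u\<in>S v w. q v u) = (\<Sum>v\<in>A. \<Sum>u\<in>B. q v u * real (card {w\<in>W. u \<in> S v w}))"
    using fin S by (intro sum_double_counting) auto
  also have "\<dots> \<le> (\<Sum>v\<in>A. \<Sum>u\<in>B. q v u * real NC)"
    using fibre q0 by (intro sum_mono mult_left_mono) auto
  also have "\<dots> = real NC * (\<Sum>v\<in>A. \<rho>1 v powr p) * (\<Sum>u\<in>B. \<rho>2 u powr p)"
    unfolding q_def by (simp add: sum_product sum_distrib_left ac_simps)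
  finally have total: "(\<Sum>w\<in>W. \<Sum>v\<in>A. \<Sum>u\<in>S v w. q v u)
      \<le> real NC * (\<Sum>v\<in>A. \<rho>1 v powr p) * (\<Sum>u\<in>B. \<rho>2 u powr p)" .
  have "(\<Sum>w\<in>W. (\<Sum>v\<in>P w. \<Sum>u\<in>S v w. \<rho>1 v * \<rho>2 u) powr p)
      \<le> (\<Sum>w\<in>W. (real NA * real NB) powr p * (\<Sum>v\<in>A. \<Sum>u\<in>S v w. q v u))"
    using pointwise by (rule sum_mono)
  also have "\<dots> \<le> (real NA * real NB) powr p * (real NC * (\<Sum>v\<in>A. \<rho>1 v powr p) * (\<Sum>u\<in>B. \<rho>2 u powr p))"
    using total by (simp add: sum_distrib_left[symmetric] mult_left_mono)
  finally show ?thesis by (simp add: mult.assoc)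
qed

definition dyadic :: "nat \<Rightarrow> real" where "dyadic n = 2 powr (- real n)"

lemma dyadic_pos: "dyadic n > 0"
  unfolding dyadic_def by simp

lemma dyadic_add: "dyadic (m + n) = dyadic m * dyadic n"
  unfolding dyadic_def by (simp add: powr_add[symmetric])

lemma dyadic_antimono: "m \<le> n \<Longrightarrow> dyadic n \<le> dyadic m"
  unfolding dyadic_def by simp

lemma dyadic_small: "e > 0 \<Longrightarrow> \<exists>n. dyadic n < e"
proof -
  assume e: "e > 0"
  obtain n where n: "1/e < (2::real)^n" using real_arch_pow[of 2 "1/e"] by auto
  have "dyadic n = inverse (2^n)" unfolding dyadic_def by (simp add: powr_minus powr_realpow)
  also have "\<dots> < e" using n e by (simp add: field_simps)
  finally show ?thesis by blast
qed

locale kappa_frame =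
  fixes Z :: "'a::metric_space set" and L0 \<kappa> :: real and G :: "nat \<Rightarrow> 'a set set"
    and c :: "nat \<Rightarrow> 'a set \<Rightarrow> 'a"
  assumes compact_Z: "compact Z" and self_similar: "approx_self_similar Z L0"
    and kappa_ge_1: "\<kappa> \<ge> 1"
    and cells_finite: "\<And>n. finite (G n)" and cell_subset: "\<And>n v. v \<in> G n \<Longrightarrow> v \<subseteq> Z"
    and cells_cover: "\<And>n. \<Union>(G n) = Z"
    and centre_in_Z: "\<And>n v. v \<in> G n \<Longrightarrow> c n v \<in> Z"
    and inner_ball: "\<And>n v. v \<in> G n \<Longrightarrow> zball Z (c n v) (dyadic n / \<kappa>) \<subseteq> v"
    and outer_ball: "\<And>n v. v \<in> G n \<Longrightarrow> v \<subseteq> zball Z (c n v) (\<kappa> * dyadic n)"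
    and inner_balls_disjoint: "\<And>n v w. v \<in> G n \<Longrightarrow> w \<in> G n \<Longrightarrow> v \<noteq> w \<Longrightarrow>
                 zball Z (c n v) (dyadic n / \<kappa>) \<inter> zball Z (c n w) (dyadic n / \<kappa>) = {}"
begin

abbreviation modulus :: "real \<Rightarrow> real \<Rightarrow> nat \<Rightarrow> real" where
  "modulus p d0 n \<equiv> comb_mod p (curves_diam_ge Z d0) (G n)"

lemma L0_ge_1: "L0 \<ge> 1"
  using self_similar unfolding approx_self_similar_def by auto

lemma near_centre: "w \<in> G n \<Longrightarrow> y \<in> w \<Longrightarrow> dist (c n w) y < \<kappa> * dyadic n"
  using outer_ball[of w n] unfolding zball_def by (auto simp: mem_ball)

lemma centre_separation:
  assumes "v \<in> G n" "w \<in> G n" "v \<noteq> w"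
  shows "dyadic n / \<kappa> \<le> dist (c n v) (c n w)"
proof (rule ccontr)
  assume "\<not> ?thesis"
  then have "c n w \<in> zball Z (c n v) (dyadic n / \<kappa>) \<inter> zball Z (c n w) (dyadic n / \<kappa>)"
    using centre_in_Z[OF assms(2)] dyadic_pos[of n] kappa_ge_1 unfolding zball_def by auto
  then show False using inner_balls_disjoint[OF assms] by auto
qed

lemma centre_inj: "inj_on (c n) (G n)"
proof (rule inj_onI)
  fix v w assume "v \<in> G n" "w \<in> G n" "c n v = c n w"
  moreover have "dyadic n / \<kappa> > 0" using dyadic_pos[of n] kappa_ge_1 by auto
  ultimately show "v = w" using centre_separation[of v n w] by force
qed

text \<open>This uses self-similarity through
  the scale-invariant packing bound.\<close>
lemma bounded_cell_multiplicity:
  assumes "\<sigma> > 0"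
  shows "\<exists>N. \<forall>n x W. x \<in> Z \<longrightarrow> W \<subseteq> G n \<longrightarrow> (\<forall>v\<in>W. dist x (c n v) < \<sigma> * dyadic n) \<longrightarrow> card W \<le> N"
proof -
  obtain N where N: "\<forall>x\<in>Z. \<forall>t>0. \<forall>S. S \<subseteq> Z \<inter> ball x ((\<sigma>*\<kappa>)*t) \<longrightarrow>
            (\<forall>y\<in>S. \<forall>y'\<in>S. y \<noteq> y' \<longrightarrow> t \<le> dist y y') \<longrightarrow> card S \<le> N"
    using self_similar_separated_card_bound[OF compact_Z self_similar, of "\<sigma>*\<kappa>"] assms kappa_ge_1 by auto
  show ?thesis
  proof (intro exI allI impI)
    fix n x W assume x: "x \<in> Z" and W: "W \<subseteq> G n" and d: "\<forall>v\<in>W. dist x (c n v) < \<sigma> * dyadic n"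
    have t: "dyadic n / \<kappa> > 0" using dyadic_pos[of n] kappa_ge_1 by auto
    have "(\<sigma>*\<kappa>) * (dyadic n / \<kappa>) = \<sigma> * dyadic n" using kappa_ge_1 by simp
    then have sub: "c n ` W \<subseteq> Z \<inter> ball x ((\<sigma>*\<kappa>) * (dyadic n / \<kappa>))"
      using W d centre_in_Z by (auto simp: mem_ball)
    have sep: "\<forall>y\<in>c n ` W. \<forall>y'\<in>c n ` W. y \<noteq> y' \<longrightarrow> dyadic n / \<kappa> \<le> dist y y'"
      using centre_separation W by blast
    have "card (c n ` W) \<le> N" using N[rule_format, OF x t sub] sep by blast
    moreover have "inj_on (c n) W" using inj_on_subset[OF centre_inj W] .
    ultimately show "card W \<le> N" by (simp add: card_image)
  qed
qed

definition cell_multiplicity :: "real \<Rightarrow> nat" where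
  "cell_multiplicity \<sigma> = (SOME N. \<forall>n x W. x \<in> Z \<longrightarrow> W \<subseteq> G n \<longrightarrow>
       (\<forall>v\<in>W. dist x (c n v) < \<sigma> * dyadic n) \<longrightarrow> card W \<le> N)"

lemma card_cells_near:
  assumes "\<sigma> > 0" "x \<in> Z" "W \<subseteq> G n" "\<And>v. v \<in> W \<Longrightarrow> dist x (c n v) < \<sigma> * dyadic n"
  shows "card W \<le> cell_multiplicity \<sigma>"
  unfolding cell_multiplicity_def
  by (rule someI_ex[OF bounded_cell_multiplicity[OF assms(1)], rule_format]) (use assms in auto)

definition admissible :: "real \<Rightarrow> nat \<Rightarrow> ('a set \<Rightarrow> real) \<Rightarrow> bool" where
  "admissible d0 n \<rho> \<longleftrightarrow> (\<forall>v\<in>G n. \<rho> v \<ge> 0) \<and> (\<forall>\<gamma>\<in>curves_diam_ge Z d0. rho_length (G n) \<rho> \<gamma> \<ge> 1)"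

lemma modulus_eq: "modulus p d0 n = Inf {rho_mass p (G n) \<rho> | \<rho>. admissible d0 n \<rho>}"
  unfolding comb_mod_def admissible_def ..

lemma rho_mass_nonneg: "rho_mass p V \<rho> \<ge> 0"
  unfolding rho_mass_def by (auto intro: sum_nonneg)

text \<open>The constant density 1 is admissible, since every curve meets some cell.\<close>
lemma admissible_one: "admissible d0 n (\<lambda>_. 1)"
  unfolding admissible_def
proof (intro conjI ballI)
  fix \<gamma> assume "\<gamma> \<in> curves_diam_ge Z d0"
  then obtain g where g: "\<gamma> = path_image g" "path_image g \<subseteq> Z" unfolding curves_diam_ge_def by blast
  have "g 0 \<in> \<gamma>" using g unfolding path_image_def by auto
  then obtain v where "v \<in> G n" "g 0 \<in> v" using g cells_cover[of n] by blast
  then have "{v\<in>G n. v \<inter> \<gamma> \<noteq> {}} \<noteq> {}" using \<open>g 0 \<in> \<gamma>\<close> by blast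
  moreover have "finite {v\<in>G n. v \<inter> \<gamma> \<noteq> {}}" using cells_finite by auto
  ultimately show "1 \<le> rho_length (G n) (\<lambda>_. 1) \<gamma>" unfolding rho_length_def
    by (simp add: Suc_le_eq card_gt_0_iff)
qed auto

lemma modulus_le_mass: "admissible d0 n \<rho> \<Longrightarrow> modulus p d0 n \<le> rho_mass p (G n) \<rho>"
  unfolding modulus_eq by (rule cInf_lower) (auto intro!: bdd_belowI[of _ 0] rho_mass_nonneg)

lemma modulus_ge:
  assumes "\<And>\<rho>. admissible d0 n \<rho> \<Longrightarrow> x \<le> K * rho_mass p (G n) \<rho>" "K \<ge> 0"
  shows "x \<le> K * modulus p d0 n"
  unfolding modulus_eq using assms admissible_one[of d0 n]
  by (intro le_mult_Inf) (auto intro: rho_mass_nonneg)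

lemma modulus_nonneg: "modulus p d0 n \<ge> 0"
  using modulus_ge[of d0 n 0 1 p] rho_mass_nonneg by auto

lemma modulus_le_card: "modulus p d0 n \<le> real (card (G n))"
  using modulus_le_mass[OF admissible_one, where p=p] unfolding rho_mass_def by simp

text \<open>If the curve family is nonempty, some cell meeting a fixed curve carries weight at
  least 1/#G_n, giving a lower bound for the modulus.\<close>
lemma modulus_ge_card:
  assumes \<gamma>: "\<gamma> \<in> curves_diam_ge Z d0" and p: "p \<ge> 1"
  shows "(1 / real (card (G n))) powr p \<le> modulus p d0 n"
proof -
  have "(1 / real (card (G n))) powr p \<le> 1 * rho_mass p (G n) \<rho>" if adm: "admissible d0 n \<rho>" for \<rho>
  proof -
    define V\<gamma> where "V\<gamma> = {v\<in>G n. v \<inter> \<gamma> \<noteq> {}}"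
    have len: "(\<Sum>v\<in>V\<gamma>. \<rho> v) \<ge> 1" using adm \<gamma> unfolding admissible_def rho_length_def V\<gamma>_def by auto
    have VG: "V\<gamma> \<subseteq> G n" unfolding V\<gamma>_def by auto
    have "\<exists>v\<in>V\<gamma>. \<rho> v \<ge> 1 / real (card (G n))"
    proof (rule ccontr)
      assume "\<not> ?thesis"
      then have "(\<Sum>v\<in>V\<gamma>. \<rho> v) < (\<Sum>v\<in>V\<gamma>. 1 / real (card (G n)))"
        using len cells_finite VG by (intro sum_strict_mono) (auto intro: finite_subset)
      also have "\<dots> \<le> 1"
        using card_mono[OF cells_finite VG] by (cases "card (G n) = 0") (auto simp: field_simps)
      finally show False using len by linarith
    qed
    then obtain v where v: "v \<in> V\<gamma>" "\<rho> v \<ge> 1 / real (card (G n))" by auto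
    have "(1 / real (card (G n))) powr p \<le> \<rho> v powr p" using v(2) p by (intro powr_mono2) auto
    also have "\<dots> \<le> rho_mass p (G n) \<rho>" unfolding rho_mass_def
      using v(1) VG cells_finite by (intro member_le_sum) auto
    finally show ?thesis by simp
  qed
  from modulus_ge[OF this] show ?thesis by simp
qed

lemma modulus_empty_family:
  assumes "curves_diam_ge Z d0 = {}"
  shows "modulus p d0 n = 0"
proof -
  have "admissible d0 n (\<lambda>_. 0)" unfolding admissible_def using assms by auto
  from modulus_le_mass[OF this, where p=p] modulus_nonneg[of p d0 n] show ?thesis
    unfolding rho_mass_def by simp
qed

lemma modulus_submult_from_densities:
  assumes K: "K \<ge> 0"
    and compose: "\<And>\<rho>1 \<rho>2. admissible d0 a \<rho>1 \<Longrightarrow> admissible d0 b \<rho>2 \<Longrightarrow>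
       \<exists>\<rho>. admissible d0 (a+b) \<rho> \<and> rho_mass p (G (a+b)) \<rho> \<le> K * rho_mass p (G a) \<rho>1 * rho_mass p (G b) \<rho>2"
  shows "modulus p d0 (a+b) \<le> K * modulus p d0 a * modulus p d0 b"
proof -
  have both: "modulus p d0 (a+b) \<le> K * rho_mass p (G a) \<rho>1 * rho_mass p (G b) \<rho>2"
    if adm: "admissible d0 a \<rho>1" "admissible d0 b \<rho>2" for \<rho>1 \<rho>2
  proof -
    obtain \<rho> where "admissible d0 (a+b) \<rho>"
      and "rho_mass p (G (a+b)) \<rho> \<le> K * rho_mass p (G a) \<rho>1 * rho_mass p (G b) \<rho>2"
      using compose[OF adm] by blast
    then show ?thesis using modulus_le_mass[of d0 "a+b" \<rho> p] by linarith
  qed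
  have "modulus p d0 (a+b) \<le> (K * modulus p d0 a) * rho_mass p (G b) \<rho>2"
    if "admissible d0 b \<rho>2" for \<rho>2
  proof -
    have "modulus p d0 (a+b) \<le> (K * rho_mass p (G b) \<rho>2) * modulus p d0 a"
      using both[OF _ that] mult_nonneg_nonneg[OF K rho_mass_nonneg] by (intro modulus_ge) (auto simp: ac_simps)
    then show ?thesis by (simp add: ac_simps)
  qed
  moreover have "K * modulus p d0 a \<ge> 0" using K modulus_nonneg by simp
  ultimately show ?thesis by (rule modulus_ge)
qed

end

locale two_scale = kappa_frame +
  fixes a b :: nat and r :: real and f :: "'a set \<Rightarrow> 'a \<Rightarrow> 'a"
  assumes radius: "r = 3 * \<kappa> * dyadic a"
    and f_into: "\<And>v. v \<in> G a \<Longrightarrow> f v ` zball Z (c a v) r \<subseteq> Z"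
    and f_bilipschitz: "\<And>v x y. v \<in> G a \<Longrightarrow> x \<in> zball Z (c a v) r \<Longrightarrow> y \<in> zball Z (c a v) r \<Longrightarrow>
          dist x y / r / L0 \<le> dist (f v x) (f v y) \<and> dist (f v x) (f v y) \<le> L0 * (dist x y / r)"
begin

definition parents :: "'a set \<Rightarrow> 'a set set" where
  "parents w = {v\<in>G a. w \<inter> zball Z (c a v) r \<noteq> {}}"

definition lifts :: "'a set \<Rightarrow> 'a set \<Rightarrow> 'a set set" where
  "lifts v w = {u\<in>G b. u \<inter> f v ` (w \<inter> zball Z (c a v) r) \<noteq> {}}"

definition composed :: "('a set \<Rightarrow> real) \<Rightarrow> ('a set \<Rightarrow> real) \<Rightarrow> 'a set \<Rightarrow> real" where
  "composed \<rho>1 \<rho>2 w = (\<Sum>v\<in>parents w. \<Sum>u\<in>lifts v w. \<rho>1 v * \<rho>2 u)"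

lemma radius_pos: "r > 0"
  using radius kappa_ge_1 dyadic_pos[of a] by auto

lemma parent_cell: "v \<in> parents w \<Longrightarrow> v \<in> G a"
  unfolding parents_def by auto

lemma lift_cell: "u \<in> lifts v w \<Longrightarrow> u \<in> G b"
  unfolding lifts_def by auto

lemma parent_near:
  assumes w: "w \<in> G (a+b)" and v: "v \<in> parents w"
  shows "dist (c (a+b) w) (c a v) < (4*\<kappa>) * dyadic a"
proof -
  obtain y where y: "y \<in> w" "y \<in> zball Z (c a v) r" using v unfolding parents_def by auto
  have "dist (c a v) y < 3*\<kappa>*dyadic a" using y(2) radius unfolding zball_def by (auto simp: mem_ball)
  moreover have "\<kappa> * dyadic (a+b) \<le> \<kappa> * dyadic a"
    using dyadic_antimono[of a "a+b"] kappa_ge_1 by (intro mult_left_mono) auto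
  then have "dist (c (a+b) w) y < \<kappa> * dyadic a" using near_centre[OF w y(1)] by linarith
  moreover have "(4*\<kappa>) * dyadic a = 3*\<kappa>*dyadic a + \<kappa> * dyadic a" by (simp add: algebra_simps)
  ultimately show ?thesis
    using dist_triangle[of "c (a+b) w" "c a v" y] dist_commute[of y "c a v"] by linarith
qed

lemma lift_near:
  assumes v: "v \<in> G a" and w: "w \<in> G (a+b)" and y1: "y1 \<in> w" "y1 \<in> zball Z (c a v) r"
    and u: "u \<in> lifts v w"
  shows "dist (f v y1) (c b u) < (L0+\<kappa>) * dyadic b"
proof -
  obtain y where y: "y \<in> w" "y \<in> zball Z (c a v) r" "f v y \<in> u" and uB: "u \<in> G b"
    using u unfolding lifts_def by auto
  have "dist y1 y < 2*\<kappa>*dyadic (a+b)"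
    using near_centre[OF w y1(1)] near_centre[OF w y(1)] dist_triangle3[of y1 y "c (a+b) w"] by linarith
  then have "dist y1 y / r \<le> 2*\<kappa>*dyadic (a+b) / r"
    using radius_pos by (intro divide_right_mono) auto
  then have "L0 * (dist y1 y / r) \<le> L0 * (2*\<kappa>*dyadic (a+b) / r)"
    using L0_ge_1 by (intro mult_left_mono) auto
  then have "dist (f v y1) (f v y) \<le> L0 * (2*\<kappa>*dyadic (a+b) / r)"
    using f_bilipschitz[OF v y1(2) y(2)] by linarith
  also have "\<dots> = L0 * dyadic b * (2/3)"
    unfolding radius dyadic_add using kappa_ge_1 dyadic_pos[of a] by (simp add: field_simps)
  also have "\<dots> \<le> L0 * dyadic b" using L0_ge_1 dyadic_pos[of b] by auto
  finally show ?thesis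
    using near_centre[OF uB y(3)] dist_triangle[of "f v y1" "c b u" "f v y"] dist_commute[of "c b u" "f v y"]
    by (simp add: algebra_simps)
qed

text \<open>Conversely, the scale-(a+b) cells having a fixed u among their lifts through v all lie
  near a single point y0, because f v is co-Lipschitz.\<close>
lemma lift_fibre_near:
  assumes v: "v \<in> G a" and u: "u \<in> G b" and y0: "y0 \<in> zball Z (c a v) r" "f v y0 \<in> u"
    and w: "w \<in> G (a+b)" "u \<in> lifts v w"
  shows "dist y0 (c (a+b) w) < (6*\<kappa>*\<kappa>*L0+\<kappa>) * dyadic (a+b)"
proof -
  obtain y where y: "y \<in> w" "y \<in> zball Z (c a v) r" "f v y \<in> u" using w(2) unfolding lifts_def by auto
  have "dist (f v y0) (f v y) < 2*\<kappa>*dyadic b"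
    using near_centre[OF u y0(2)] near_centre[OF u y(3)] dist_triangle3[of "f v y0" "f v y" "c b u"] by linarith
  then have "dist y0 y / r / L0 < 2*\<kappa>*dyadic b" using f_bilipschitz[OF v y0(1) y(2)] by linarith
  then have "dist y0 y < 2*\<kappa>*dyadic b * r * L0" using radius_pos L0_ge_1 by (simp add: field_simps)
  also have "\<dots> = 6*\<kappa>*\<kappa>*L0 * dyadic (a+b)" unfolding radius dyadic_add by (simp add: algebra_simps)
  finally show ?thesis
    using near_centre[OF w(1) y(1)] dist_triangle[of y0 "c (a+b) w" y] dist_commute[of y "c (a+b) w"]
    by (simp add: algebra_simps)
qed

lemma card_parents: "w \<in> G (a+b) \<Longrightarrow> card (parents w) \<le> cell_multiplicity (4*\<kappa>)"
  using card_cells_near[of "4*\<kappa>" "c (a+b) w" "parents w" a] kappa_ge_1 centre_in_Z parent_cell parent_near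
  by auto

lemma card_lifts:
  assumes v: "v \<in> G a" and w: "w \<in> G (a+b)"
  shows "card (lifts v w) \<le> cell_multiplicity (L0+\<kappa>)"
proof (cases "w \<inter> zball Z (c a v) r = {}")
  case True then show ?thesis unfolding lifts_def by simp
next
  case False
  then obtain y1 where y1: "y1 \<in> w" "y1 \<in> zball Z (c a v) r" by auto
  then have "f v y1 \<in> Z" using f_into[OF v] by auto
  then show ?thesis
    using card_cells_near[of "L0+\<kappa>" "f v y1" "lifts v w" b] kappa_ge_1 L0_ge_1 lift_cell
      lift_near[OF v w y1] by auto
qed

lemma card_lift_fibre:
  assumes v: "v \<in> G a" and u: "u \<in> G b"
  shows "card {w\<in>G (a+b). u \<in> lifts v w} \<le> cell_multiplicity (6*\<kappa>*\<kappa>*L0+\<kappa>)"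
proof (cases "{w\<in>G (a+b). u \<in> lifts v w} = {}")
  case True then show ?thesis by (simp only: card.empty)
next
  case False
  then obtain y0 where y0: "y0 \<in> zball Z (c a v) r" "f v y0 \<in> u" unfolding lifts_def by blast
  have "6*\<kappa>*\<kappa>*L0+\<kappa> > 0" using kappa_ge_1 L0_ge_1 by (simp add: add_pos_pos)
  moreover have "y0 \<in> Z" using y0(1) unfolding zball_def by auto
  ultimately show ?thesis
    using card_cells_near[of "6*\<kappa>*\<kappa>*L0+\<kappa>" y0 "{w\<in>G (a+b). u \<in> lifts v w}" "a+b"]
      lift_fibre_near[OF v u y0] by auto
qed

lemma composed_mass:
  assumes "\<forall>v\<in>G a. \<rho>1 v \<ge> 0" "\<forall>u\<in>G b. \<rho>2 u \<ge> 0" "p \<ge> 1"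
  shows "rho_mass p (G (a+b)) (composed \<rho>1 \<rho>2)
    \<le> (real (cell_multiplicity (4*\<kappa>)) * real (cell_multiplicity (L0+\<kappa>))) powr p
       * real (cell_multiplicity (6*\<kappa>*\<kappa>*L0+\<kappa>)) * rho_mass p (G a) \<rho>1 * rho_mass p (G b) \<rho>2"
  unfolding rho_mass_def composed_def
  using assms card_parents card_lifts card_lift_fibre cells_finite
  by (intro composed_density_mass) (auto intro: parent_cell lift_cell)

lemma composed_nonneg:
  assumes "\<forall>v\<in>G a. \<rho>1 v \<ge> 0" "\<forall>u\<in>G b. \<rho>2 u \<ge> 0"
  shows "composed \<rho>1 \<rho>2 w \<ge> 0"
  unfolding composed_def using assms
  by (intro sum_nonneg mult_nonneg_nonneg) (auto dest: parent_cell lift_cell)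

text \<open>This is
  where d0 \<le> 1/(3L0) and the smallness 3\<kappa>2^-a L0 \<le> 1 of the scale are needed.\<close>
lemma blown_up_subcurve:
  assumes d0: "0 < d0" "d0 \<le> 1/(3*L0)" and small: "3*\<kappa>*dyadic a*L0 \<le> 1"
    and \<gamma>: "\<gamma> \<in> curves_diam_ge Z d0" and v: "v \<in> G a" "v \<inter> \<gamma> \<noteq> {}"
  shows "\<exists>H. H \<subseteq> \<gamma> \<inter> zball Z (c a v) r \<and> f v ` H \<in> curves_diam_ge Z d0"
proof -
  obtain g where g: "\<gamma> = path_image g" "path g" "path_image g \<subseteq> Z" "d0 \<le> diameter (path_image g)"
    using \<gamma> unfolding curves_diam_ge_def by blast
  obtain z0 where z0: "z0 \<in> v" "z0 \<in> path_image g" using v g(1) by auto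
  have "dist z0 (c a v) < \<kappa> * dyadic a" using near_centre[OF v(1) z0(1)] by (simp add: dist_commute)
  then obtain h x y where h: "path h" "path_image h \<subseteq> path_image g \<inter> ball (c a v) (3*(\<kappa> * dyadic a))"
    and xy: "x \<in> path_image h" "y \<in> path_image h" "min d0 (\<kappa> * dyadic a) \<le> dist x y"
    using curve_piece_in_ball[OF g(2) z0(2) _ g(4)] by blast
  have hB: "path_image h \<subseteq> zball Z (c a v) r"
    using h(2) g(3) radius unfolding zball_def by (auto simp: mult.assoc)
  have "d0 \<le> dist x y / r / L0"
  proof (cases "d0 \<le> \<kappa> * dyadic a")
    case True
    have "d0 * (r * L0) \<le> d0 * 1" using small d0 radius by (intro mult_left_mono) auto
    then show ?thesis using True xy(3) radius_pos L0_ge_1 by (simp add: field_simps)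
  next
    case False
    have "\<kappa> * dyadic a / r / L0 = 1 / (3 * L0)"
      unfolding radius using dyadic_pos[of a] kappa_ge_1 by (simp add: field_simps)
    moreover have "\<kappa> * dyadic a / r / L0 \<le> dist x y / r / L0"
      using False xy(3) radius_pos L0_ge_1 by (intro divide_right_mono) auto
    ultimately show ?thesis using d0(2) by linarith
  qed
  also have "\<dots> \<le> dist (f v x) (f v y)"
    using f_bilipschitz[OF v(1) subsetD[OF hB xy(1)] subsetD[OF hB xy(2)]] by (rule conjunct1)
  finally have far: "d0 \<le> dist (f v x) (f v y)" .
  have lip: "(L0 / r)-lipschitz_on (zball Z (c a v) r) (f v)"
    using f_bilipschitz[OF v(1)] radius_pos L0_ge_1 by (intro lipschitz_onI) auto
  have "f v ` path_image h \<in> curves_diam_ge Z d0"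
    by (rule lipschitz_image_in_curves[OF h(1) hB lip f_into[OF v(1)] xy(1,2) far])
  then show ?thesis using hB h(2) g(1) by blast
qed

lemma lifted_length:
  assumes d0: "0 < d0" "d0 \<le> 1/(3*L0)" and small: "3*\<kappa>*dyadic a*L0 \<le> 1"
    and \<rho>2: "admissible d0 b \<rho>2" and \<gamma>: "\<gamma> \<in> curves_diam_ge Z d0" and v: "v \<in> G a" "v \<inter> \<gamma> \<noteq> {}"
  shows "1 \<le> (\<Sum>w\<in>{w\<in>G (a+b). w \<inter> \<gamma> \<noteq> {}}. \<Sum>u\<in>lifts v w. \<rho>2 u)"
proof -
  define W\<gamma> where "W\<gamma> = {w\<in>G (a+b). w \<inter> \<gamma> \<noteq> {}}"
  obtain H where H: "H \<subseteq> \<gamma> \<inter> zball Z (c a v) r" "f v ` H \<in> curves_diam_ge Z d0"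
    using blown_up_subcurve[OF d0 small \<gamma> v] by blast
  have nonneg: "\<forall>u\<in>G b. \<rho>2 u \<ge> 0" using \<rho>2 unfolding admissible_def by auto
  have "1 \<le> rho_length (G b) \<rho>2 (f v ` H)" using \<rho>2 H(2) unfolding admissible_def by auto
  also have "\<dots> \<le> sum \<rho>2 (\<Union>w\<in>W\<gamma>. lifts v w)" unfolding rho_length_def
  proof (rule sum_mono2)
    have "(\<Union>w\<in>W\<gamma>. lifts v w) \<subseteq> G b" by (auto intro: lift_cell)
    then show "finite (\<Union>w\<in>W\<gamma>. lifts v w)" by (rule finite_subset) (rule cells_finite)
    show "{u\<in>G b. u \<inter> f v ` H \<noteq> {}} \<subseteq> (\<Union>w\<in>W\<gamma>. lifts v w)"
    proof
      fix u assume "u \<in> {u\<in>G b. u \<inter> f v ` H \<noteq> {}}"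
      then obtain y where u: "u \<in> G b" and y: "y \<in> H" "f v y \<in> u" by auto
      have "y \<in> Z" using y(1) H(1) unfolding zball_def by auto
      then obtain w where w: "w \<in> G (a+b)" "y \<in> w" using cells_cover[of "a+b"] by auto
      then have "w \<in> W\<gamma>" "u \<in> lifts v w" using y H(1) u unfolding W\<gamma>_def lifts_def by auto
      then show "u \<in> (\<Union>w\<in>W\<gamma>. lifts v w)" by blast
    qed
  next
    fix u assume "u \<in> (\<Union>w\<in>W\<gamma>. lifts v w) - {u\<in>G b. u \<inter> f v ` H \<noteq> {}}"
    then have "u \<in> G b" by (auto dest: lift_cell)
    then show "0 \<le> \<rho>2 u" using nonneg by blast
  qed
  also have "\<dots> \<le> (\<Sum>w\<in>W\<gamma>. sum \<rho>2 (lifts v w))"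
    using cells_finite nonneg unfolding W\<gamma>_def
    by (intro sum_UN_le) (auto intro: finite_subset dest: lift_cell)
  finally show ?thesis unfolding W\<gamma>_def .
qed

text \<open>The composed density is admissible on scale a+b: rearranging the sum, the length of
  \<gamma> is a \<rho>1-weighted sum over the scale-a cells meeting \<gamma> of lifted lengths, each \<ge> 1.\<close>
lemma composed_admissible:
  assumes d0: "0 < d0" "d0 \<le> 1/(3*L0)" and small: "3*\<kappa>*dyadic a*L0 \<le> 1"
    and \<rho>1: "admissible d0 a \<rho>1" and \<rho>2: "admissible d0 b \<rho>2"
  shows "admissible d0 (a+b) (composed \<rho>1 \<rho>2)"
proof -
  have nonneg: "\<forall>v\<in>G a. \<rho>1 v \<ge> 0" "\<forall>u\<in>G b. \<rho>2 u \<ge> 0"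
    using \<rho>1 \<rho>2 unfolding admissible_def by auto
  have "1 \<le> rho_length (G (a+b)) (composed \<rho>1 \<rho>2) \<gamma>" if \<gamma>: "\<gamma> \<in> curves_diam_ge Z d0" for \<gamma>
  proof -
    define W\<gamma> where "W\<gamma> = {w\<in>G (a+b). w \<inter> \<gamma> \<noteq> {}}"
    define J where "J v = (\<Sum>w\<in>W\<gamma>. \<Sum>u\<in>lifts v w. \<rho>2 u)" for v
    have J: "J v \<ge> 0" for v unfolding J_def using nonneg by (intro sum_nonneg) (auto dest: lift_cell)
    have "composed \<rho>1 \<rho>2 w = (\<Sum>v\<in>G a. \<rho>1 v * (\<Sum>u\<in>lifts v w. \<rho>2 u))" for w
    proof -
      have "\<forall>v\<in>G a - parents w. lifts v w = {}" unfolding parents_def lifts_def by auto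
      then show ?thesis unfolding composed_def sum_distrib_left
        using cells_finite by (intro sum.mono_neutral_left) (auto dest: parent_cell)
    qed
    then have "rho_length (G (a+b)) (composed \<rho>1 \<rho>2) \<gamma> = (\<Sum>v\<in>G a. \<rho>1 v * J v)"
      unfolding rho_length_def J_def W\<gamma>_def[symmetric] by (simp add: sum_distrib_left sum.swap[of _ W\<gamma>])
    moreover have "1 \<le> (\<Sum>v\<in>{v\<in>G a. v \<inter> \<gamma> \<noteq> {}}. \<rho>1 v)"
      using \<rho>1 \<gamma> unfolding admissible_def rho_length_def by auto
    moreover have "\<rho>1 v \<le> \<rho>1 v * J v" if "v \<in> G a" "v \<inter> \<gamma> \<noteq> {}" for v
      using mult_left_mono[OF lifted_length[OF d0 small \<rho>2 \<gamma> that], of "\<rho>1 v"] nonneg that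
      unfolding J_def W\<gamma>_def by simp
    then have "(\<Sum>v\<in>{v\<in>G a. v \<inter> \<gamma> \<noteq> {}}. \<rho>1 v) \<le> (\<Sum>v\<in>{v\<in>G a. v \<inter> \<gamma> \<noteq> {}}. \<rho>1 v * J v)"
      by (intro sum_mono) auto
    moreover have "\<dots> \<le> (\<Sum>v\<in>G a. \<rho>1 v * J v)"
      using cells_finite nonneg J by (intro sum_mono2) auto
    ultimately show ?thesis by linarith
  qed
  then show ?thesis unfolding admissible_def using composed_nonneg[OF nonneg] by auto
qed

end

lemma self_similar_blowups:
  assumes ss: "approx_self_similar Z L0" and r: "0 < r" "r \<le> diameter Z"
    and ctr: "\<And>v. v \<in> V \<Longrightarrow> ctr v \<in> Z"
  shows "\<exists>f. \<forall>v\<in>V. f v ` zball Z (ctr v) r \<subseteq> Z \<and>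
           (\<forall>x\<in>zball Z (ctr v) r. \<forall>y\<in>zball Z (ctr v) r.
              dist x y / r / L0 \<le> dist (f v x) (f v y) \<and> dist (f v x) (f v y) \<le> L0 * (dist x y / r))"
proof -
  have "\<exists>g. g ` zball Z (ctr v) r \<subseteq> Z \<and>
           (\<forall>x\<in>zball Z (ctr v) r. \<forall>y\<in>zball Z (ctr v) r.
              dist x y / r / L0 \<le> dist (g x) (g y) \<and> dist (g x) (g y) \<le> L0 * (dist x y / r))"
    if v: "v \<in> V" for v
  proof -
    obtain U g where "U \<subseteq> Z" "bij_betw g (zball Z (ctr v) r) U"
      "\<forall>x\<in>zball Z (ctr v) r. \<forall>y\<in>zball Z (ctr v) r.
          dist x y / r / L0 \<le> dist (g x) (g y) \<and> dist (g x) (g y) \<le> L0 * (dist x y / r)"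
      using ss[unfolded approx_self_similar_def, THEN conjunct2, rule_format, OF ctr[OF v], of r] r
      by blast
    then show ?thesis unfolding bij_betw_def by blast
  qed
  then have "\<forall>v\<in>V. \<exists>g. g ` zball Z (ctr v) r \<subseteq> Z \<and>
           (\<forall>x\<in>zball Z (ctr v) r. \<forall>y\<in>zball Z (ctr v) r.
              dist x y / r / L0 \<le> dist (g x) (g y) \<and> dist (g x) (g y) \<le> L0 * (dist x y / r))" by blast
  then show ?thesis by (rule bchoice)
qed

lemma kappa_frame_of_approx:
  assumes Zc: "compact Z" and ss: "approx_self_similar Z L0" and kG: "kappa_approx Z \<kappa> G"
  shows "\<exists>c. kappa_frame Z L0 \<kappa> G c"
proof -
  have scale: "\<forall>k. kappa_approx_scale Z \<kappa> k (G k)" and k1: "\<kappa> \<ge> 1"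
    using kG unfolding kappa_approx_def by auto
  then have "\<forall>k. \<exists>c. (\<forall>v\<in>G k. c v \<in> Z \<and> zball Z (c v) (dyadic k / \<kappa>) \<subseteq> v \<and>
                         v \<subseteq> zball Z (c v) (\<kappa> * dyadic k)) \<and>
          (\<forall>v\<in>G k. \<forall>w\<in>G k. v \<noteq> w \<longrightarrow>
              zball Z (c v) (dyadic k / \<kappa>) \<inter> zball Z (c w) (dyadic k / \<kappa>) = {})"
    unfolding kappa_approx_scale_def dyadic_def by blast
  then obtain c where c: "\<forall>k. (\<forall>v\<in>G k. c k v \<in> Z \<and> zball Z (c k v) (dyadic k / \<kappa>) \<subseteq> v \<and>
                         v \<subseteq> zball Z (c k v) (\<kappa> * dyadic k)) \<and>
          (\<forall>v\<in>G k. \<forall>w\<in>G k. v \<noteq> w \<longrightarrow>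
              zball Z (c k v) (dyadic k / \<kappa>) \<inter> zball Z (c k w) (dyadic k / \<kappa>) = {})"
    by (rule choice[THEN exE]) blast
  have "kappa_frame Z L0 \<kappa> G c"
    using Zc ss k1 scale c unfolding kappa_approx_scale_def by unfold_locales auto
  then show ?thesis by blast
qed

context kappa_frame
begin

lemma fine_scales:
  assumes "diameter Z > 0"
  shows "\<exists>a0. \<forall>a\<ge>a0. 3*\<kappa>*dyadic a \<le> diameter Z \<and> 3*\<kappa>*dyadic a*L0 \<le> 1"
proof -
  have pos: "min (diameter Z/(3*\<kappa>)) (1/(3*\<kappa>*L0)) > 0" using assms kappa_ge_1 L0_ge_1 by auto
  obtain a0 where a0: "dyadic a0 < min (diameter Z/(3*\<kappa>)) (1/(3*\<kappa>*L0))"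
    using dyadic_small[OF pos] by blast
  have "3*\<kappa>*dyadic a \<le> diameter Z \<and> 3*\<kappa>*dyadic a*L0 \<le> 1" if "a0 \<le> a" for a
  proof -
    have "dyadic a < diameter Z/(3*\<kappa>)" "dyadic a < 1/(3*\<kappa>*L0)"
      using dyadic_antimono[OF that] a0 by auto
    then show ?thesis using kappa_ge_1 L0_ge_1 by (simp add: field_simps)
  qed
  then show ?thesis by blast
qed

definition composition_constant :: "real \<Rightarrow> real" where
  "composition_constant P =
     max 1 (real (cell_multiplicity (4*\<kappa>)) * real (cell_multiplicity (L0+\<kappa>))) powr P
       * real (cell_multiplicity (6*\<kappa>*\<kappa>*L0+\<kappa>))"

lemma modulus_submult_fine_scale:
  assumes d0: "0 < d0" "d0 \<le> 1/(3*L0)" and p: "1 \<le> p" "p \<le> P"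
    and fine: "3*\<kappa>*dyadic a \<le> diameter Z" "3*\<kappa>*dyadic a*L0 \<le> 1"
  shows "modulus p d0 (a+b) \<le> composition_constant P * modulus p d0 a * modulus p d0 b"
proof -
  define r where "r = 3*\<kappa>*dyadic a"
  have r0: "r > 0" unfolding r_def using kappa_ge_1 dyadic_pos[of a] by auto
  have rD: "r \<le> diameter Z" unfolding r_def by (rule fine(1))
  obtain f where f: "\<forall>v\<in>G a. f v ` zball Z (c a v) r \<subseteq> Z \<and>
           (\<forall>x\<in>zball Z (c a v) r. \<forall>y\<in>zball Z (c a v) r.
              dist x y / r / L0 \<le> dist (f v x) (f v y) \<and> dist (f v x) (f v y) \<le> L0 * (dist x y / r))"
    using self_similar_blowups[of Z L0 r "G a" "c a", OF self_similar r0 rD centre_in_Z] by blast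
  have "two_scale Z L0 \<kappa> G c a r f"
    by (intro two_scale.intro kappa_frame_axioms two_scale_axioms.intro) (use f r_def in auto)
  then interpret two_scale Z L0 \<kappa> G c a b r f .
  define NA NB NC where "NA = real (cell_multiplicity (4*\<kappa>))"
    and "NB = real (cell_multiplicity (L0+\<kappa>))" and "NC = real (cell_multiplicity (6*\<kappa>*\<kappa>*L0+\<kappa>))"
  have "NA * NB \<ge> 0" unfolding NA_def NB_def by simp
  then have "(NA * NB) powr p \<le> max 1 (NA * NB) powr p" using p by (intro powr_mono2) auto
  also have "\<dots> \<le> max 1 (NA * NB) powr P" using p by (intro powr_mono) auto
  finally have K: "(NA * NB) powr p * NC \<le> composition_constant P"
    unfolding composition_constant_def NA_def NB_def NC_def by (intro mult_right_mono) auto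
  show ?thesis
  proof (rule modulus_submult_from_densities)
    show "0 \<le> composition_constant P" unfolding composition_constant_def by simp
  next
    fix \<rho>1 \<rho>2 assume \<rho>: "admissible d0 a \<rho>1" "admissible d0 b \<rho>2"
    then have nonneg: "\<forall>v\<in>G a. \<rho>1 v \<ge> 0" "\<forall>u\<in>G b. \<rho>2 u \<ge> 0"
      unfolding admissible_def by auto
    have "rho_mass p (G (a+b)) (composed \<rho>1 \<rho>2)
               \<le> (NA * NB) powr p * NC * rho_mass p (G a) \<rho>1 * rho_mass p (G b) \<rho>2"
      unfolding NA_def NB_def NC_def by (rule composed_mass[OF nonneg p(1)])
    also have "\<dots> \<le> composition_constant P * rho_mass p (G a) \<rho>1 * rho_mass p (G b) \<rho>2"
      using K rho_mass_nonneg by (intro mult_right_mono) auto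
    finally show "\<exists>\<rho>. admissible d0 (a+b) \<rho> \<and>
        rho_mass p (G (a+b)) \<rho> \<le> composition_constant P * rho_mass p (G a) \<rho>1 * rho_mass p (G b) \<rho>2"
      using composed_admissible[OF d0 fine(2) \<rho>] by blast
  qed
qed

text \<open>Crude submultiplicativity valid on all scales, from the trivial bounds
  (1/#G_n)^p \<le> modulus \<le> #G_n; it is used on the finitely many coarse scales.\<close>
lemma modulus_submult_crude:
  assumes \<gamma>: "\<gamma> \<in> curves_diam_ge Z d0" and p: "1 \<le> p" "p \<le> P"
  shows "modulus p d0 (k+l)
    \<le> real (card (G (k+l))) * (real (card (G k)) * real (card (G l))) powr P * modulus p d0 k * modulus p d0 l"
proof -
  define ck cl where "ck = real (card (G k))" and "cl = real (card (G l))"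
  obtain g where "path_image g \<subseteq> Z" using \<gamma> unfolding curves_diam_ge_def by blast
  then have "Z \<noteq> {}" unfolding path_image_def by auto
  then have "G n \<noteq> {}" for n using cells_cover[of n] by auto
  then have cards: "ck \<ge> 1" "cl \<ge> 1" unfolding ck_def cl_def
    using cells_finite by (simp_all add: Suc_le_eq card_gt_0_iff)
  then have "ck * cl \<ge> 1" using mult_mono[of 1 ck 1 cl] by auto
  then have "(1/(ck*cl)) powr P \<le> (1/(ck*cl)) powr p"
    using p cards by (intro powr_mono') (auto simp: field_simps)
  also have "\<dots> = (1/ck) powr p * (1/cl) powr p" using cards by (simp add: powr_mult[symmetric])
  also have "\<dots> \<le> modulus p d0 k * modulus p d0 l"
    using modulus_ge_card[OF \<gamma> p(1)] modulus_nonneg unfolding ck_def cl_def by (intro mult_mono) auto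
  finally have prod: "(1/(ck*cl)) powr P \<le> modulus p d0 k * modulus p d0 l" .
  have "(ck*cl) powr P * (1/(ck*cl)) powr P = 1" using cards by (simp add: powr_mult[symmetric])
  then have "modulus p d0 (k+l) \<le> real (card (G (k+l))) * (ck*cl) powr P * (1/(ck*cl)) powr P"
    using modulus_le_card by (simp add: mult.assoc)
  also have "\<dots> \<le> real (card (G (k+l))) * (ck*cl) powr P * (modulus p d0 k * modulus p d0 l)"
    using prod by (intro mult_left_mono) auto
  finally show ?thesis unfolding ck_def cl_def by (simp add: mult.assoc)
qed

text \<open>Submultiplicativity with one constant for all exponents p \<in> [1,P]: if one of the two
  scales is fine, compose scales; if both are coarse, use the crude bound, of which there are
  only finitely many instances.\<close>
lemma modulus_submult_uniform:
  assumes d0: "0 < d0" "d0 \<le> 1/(3*L0)"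
  shows "\<exists>C>0. \<forall>p. 1 \<le> p \<and> p \<le> P \<longrightarrow> (\<forall>k l. modulus p d0 (k+l) \<le> C * modulus p d0 k * modulus p d0 l)"
proof (cases "curves_diam_ge Z d0 = {}")
  case True
  have "modulus p d0 n = 0" for p n by (rule modulus_empty_family[OF True])
  then show ?thesis by (intro exI[of _ 1]) simp
next
  case False
  then obtain \<gamma> where \<gamma>: "\<gamma> \<in> curves_diam_ge Z d0" by blast
  then have "diameter Z > 0" using diameter_pos_of_curve compact_imp_bounded[OF compact_Z] d0(1) by blast
  then obtain a0 where a0: "\<forall>a\<ge>a0. 3*\<kappa>*dyadic a \<le> diameter Z \<and> 3*\<kappa>*dyadic a*L0 \<le> 1"
    using fine_scales by blast
  define crude where "crude k l = real (card (G (k+l))) * (real (card (G k)) * real (card (G l))) powr P" for k l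
  define C where "C = (\<Sum>k<a0. \<Sum>l<a0. crude k l) + composition_constant P + 1"
  have crude0: "crude k l \<ge> 0" for k l by (simp add: crude_def)
  have cc: "composition_constant P \<ge> 0" unfolding composition_constant_def by simp
  have crude_le: "crude k l \<le> C" if "k < a0" "l < a0" for k l
    using member_le_double_sum[of crude, OF crude0 that] cc unfolding C_def by linarith
  have comp_le: "composition_constant P \<le> C"
    unfolding C_def using crude0 by (simp add: sum_nonneg)
  have "modulus p d0 (k+l) \<le> C * modulus p d0 k * modulus p d0 l" if p: "1 \<le> p" "p \<le> P" for p k l
  proof -
    have m: "0 \<le> modulus p d0 k * modulus p d0 l" using modulus_nonneg by simp
    have scale_up: "modulus p d0 (k+l) \<le> C * modulus p d0 k * modulus p d0 l"
      if "modulus p d0 (k+l) \<le> Y * modulus p d0 k * modulus p d0 l" "Y \<le> C" for Y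
      using that mult_right_mono[OF that(2) m] by (simp add: mult.assoc)
    consider "a0 \<le> k" | "a0 \<le> l" | "k < a0" "l < a0" by linarith
    then show ?thesis
    proof cases
      case 1
      then have "3*\<kappa>*dyadic k \<le> diameter Z" "3*\<kappa>*dyadic k*L0 \<le> 1" using a0 by auto
      from modulus_submult_fine_scale[OF d0 p this] show ?thesis by (rule scale_up[OF _ comp_le])
    next
      case 2
      then have "3*\<kappa>*dyadic l \<le> diameter Z" "3*\<kappa>*dyadic l*L0 \<le> 1" using a0 by auto
      from modulus_submult_fine_scale[OF d0 p this, of k]
      have "modulus p d0 (k+l) \<le> composition_constant P * modulus p d0 k * modulus p d0 l"
        by (simp only: add.commute[of k l]) (simp add: ac_simps)
      then show ?thesis by (rule scale_up[OF _ comp_le])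
    next
      case 3
      have "modulus p d0 (k+l) \<le> crude k l * modulus p d0 k * modulus p d0 l"
        unfolding crude_def by (rule modulus_submult_crude[OF \<gamma> p])
      then show ?thesis by (rule scale_up[OF _ crude_le[OF 3]])
    qed
  qed
  moreover have "C > 0" unfolding C_def using cc crude0 by (simp add: sum_nonneg add_nonneg_pos)
  ultimately show ?thesis by blast
qed

end

text \<open>The theorem for a fixed \<kappa>-approximation and a fixed d0 \<le> 1/(3L0).  For compact K the
  exponents are bounded by P = Sup K, so the uniform constant for [1,P] serves.\<close>
lemma submultiplicativity_for_approximation:
  assumes Zc: "compact Z" and ss: "approx_self_similar Z L0" and kG: "kappa_approx Z \<kappa> G"
    and d0: "0 < d0" "d0 \<le> 1/(3*L0)"
  shows "(\<forall>p\<ge>1. \<exists>C>0. \<forall>k l.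
            comb_mod p (curves_diam_ge Z d0) (G (k + l))
              \<le> C * comb_mod p (curves_diam_ge Z d0) (G k) * comb_mod p (curves_diam_ge Z d0) (G l)) \<and>
         (\<forall>K. compact K \<and> K \<subseteq> {1..} \<longrightarrow>
            (\<exists>C>0. \<forall>p\<in>K. \<forall>k l.
              comb_mod p (curves_diam_ge Z d0) (G (k + l))
                \<le> C * comb_mod p (curves_diam_ge Z d0) (G k) * comb_mod p (curves_diam_ge Z d0) (G l)))"
proof -
  obtain c where "kappa_frame Z L0 \<kappa> G c" using kappa_frame_of_approx[OF Zc ss kG] by blast
  then interpret kappa_frame Z L0 \<kappa> G c .
  have uniform: "\<exists>C>0. \<forall>p. 1 \<le> p \<and> p \<le> P \<longrightarrow>
      (\<forall>k l. modulus p d0 (k+l) \<le> C * modulus p d0 k * modulus p d0 l)" for P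
    by (rule modulus_submult_uniform[OF d0])
  show ?thesis
  proof (intro conjI allI impI)
    fix p :: real assume "1 \<le> p"
    then show "\<exists>C>0. \<forall>k l. modulus p d0 (k+l) \<le> C * modulus p d0 k * modulus p d0 l"
      using uniform[of p] by blast
  next
    fix K :: "real set" assume K: "compact K \<and> K \<subseteq> {1..}"
    then have "bdd_above K" by (intro bounded_imp_bdd_above compact_imp_bounded) auto
    then have "1 \<le> p \<and> p \<le> Sup K" if "p \<in> K" for p using K that by (auto intro: cSup_upper)
    then show "\<exists>C>0. \<forall>p\<in>K. \<forall>k l. modulus p d0 (k+l) \<le> C * modulus p d0 k * modulus p d0 l"
      using uniform[of "Sup K"] by blast
  qed
qed

theorem mainTheorem10:
  fixes Z :: "'a::metric_space set" and L0 :: real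
  assumes "compact Z" and "arcwise_connected Z" and "approx_self_similar Z L0"
  shows "\<exists>\<delta>>0. \<forall>d0. 0 < d0 \<and> d0 \<le> \<delta> \<longrightarrow>
           (\<forall>\<kappa> G. kappa_approx Z \<kappa> G \<longrightarrow>
              (\<forall>p\<ge>1. \<exists>C>0. \<forall>k l.
                  comb_mod p (curves_diam_ge Z d0) (G (k + l))
                    \<le> C * comb_mod p (curves_diam_ge Z d0) (G k) * comb_mod p (curves_diam_ge Z d0) (G l)) \<and>
              (\<forall>K. compact K \<and> K \<subseteq> {1..} \<longrightarrow>
                 (\<exists>C>0. \<forall>p\<in>K. \<forall>k l.
                  comb_mod p (curves_diam_ge Z d0) (G (k + l))
                    \<le> C * comb_mod p (curves_diam_ge Z d0) (G k) * comb_mod p (curves_diam_ge Z d0) (G l))))"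
proof -
  have "L0 \<ge> 1" using assms(3) unfolding approx_self_similar_def by auto
  then have "0 < 1/(3*L0)" by simp
  then show ?thesis
    using submultiplicativity_for_approximation[OF assms(1,3)] by (intro exI[of _ "1/(3*L0)"]) auto
qed

end
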